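(* Let $R_1\xleftarrow{f}R_{12}\xrightarrow{g}R_2$ be a weakly admissible correspondence in $\mathrm{DGRings}^{0,-1}$. Then: (i) $f$ is surjective; (ii) $\ker f$ is acyclic; (iii) the DG ideal $I\subset R_{12}$ generated by $\ker(R_{12}^{-1}\to R_1^{-1}\times R_2^{-1})$ is acyclic; (iv) the correspondence $R_1\leftarrow R_{12}/I\to R_2$ (with maps induced by $f,g$) is the admissibilization $\mathrm{Adm}$ of the given correspondence.
   Context: Rings are commutative and unital. $\mathrm{DGRings}^{0,-1}$ is the category of commutative DG rings $R$ with $R^i=0$ for $i\ne 0,-1$. Equivalently, such $R$ is a ring $R^0$, an $R^0$-module $R^{-1}$ and an $R^0$-linear $d:R^{-1}\to R^0$ with $d(x)y=d(y)x$. Quasi-isomorphisms are morphisms inducing isomorphisms on $\ker d$ and $\operatorname{coker} d$. A correspondence is a diagram $R_1\xleftarrow{f}R_{12}\xrightarrow{g}R_2$ in $\mathrm{DGRings}^{0,-1}$. Morphisms are maps $h$ of middle terms with $f'h=f$, $g'h=g$. A correspondence is admissible (resp. weakly admissible) if $f$ is a quasi-isomorphism and $R_{12}^{-1}\to R_1^{-1}\times R_2^{-1}$ is an isomorphism (resp. surjective). It is an anamorphism if $f$ is a surjective quasi-isomorphism. Weakly admissible correspondences are anamorphisms. $\mathrm{Adm}$ denotes the left adjoint of the inclusion of admissible correspondences into anamorphisms (from $R_1$ to $R_2$). *)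

theory Defs
  imports "HOL-Algebra.Algebra"
begin

text \<open>A DG ring R in DGRings^{0,-1} is given by the ring R^0 (field deg0),
  the R^0-module R^{-1} (field deg1) and the differential d : R^{-1} -> R^0 (field dd).\<close>

record ('a, 'b) dgr =
  deg0 :: "'a ring"
  deg1 :: "('a, 'b) module"
  dd   :: "'b \<Rightarrow> 'a"

definition dgring :: "('a, 'b) dgr \<Rightarrow> bool" where
  "dgring R \<longleftrightarrow>
     cring (deg0 R) \<and> module (deg0 R) (deg1 R) \<and>
     dd R \<in> carrier (deg1 R) \<rightarrow> carrier (deg0 R) \<and>
     (\<forall>x\<in>carrier (deg1 R). \<forall>y\<in>carrier (deg1 R).
        dd R (x \<oplus>\<^bsub>deg1 R\<^esub> y) = dd R x \<oplus>\<^bsub>deg0 R\<^esub> dd R y) \<and>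
     (\<forall>r\<in>carrier (deg0 R). \<forall>x\<in>carrier (deg1 R).
        dd R (r \<odot>\<^bsub>deg1 R\<^esub> x) = r \<otimes>\<^bsub>deg0 R\<^esub> dd R x) \<and>
     (\<forall>x\<in>carrier (deg1 R). \<forall>y\<in>carrier (deg1 R).
        dd R x \<odot>\<^bsub>deg1 R\<^esub> y = dd R y \<odot>\<^bsub>deg1 R\<^esub> x)"

definition dg_hom :: "('a, 'b) dgr \<Rightarrow> ('c, 'e) dgr \<Rightarrow> ('a \<Rightarrow> 'c) \<times> ('b \<Rightarrow> 'e) \<Rightarrow> bool" where
  "dg_hom R S h \<longleftrightarrow>
     fst h \<in> ring_hom (deg0 R) (deg0 S) \<and>
     snd h \<in> carrier (deg1 R) \<rightarrow> carrier (deg1 S) \<and>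
     (\<forall>x\<in>carrier (deg1 R). \<forall>y\<in>carrier (deg1 R).
        snd h (x \<oplus>\<^bsub>deg1 R\<^esub> y) = snd h x \<oplus>\<^bsub>deg1 S\<^esub> snd h y) \<and>
     (\<forall>r\<in>carrier (deg0 R). \<forall>x\<in>carrier (deg1 R).
        snd h (r \<odot>\<^bsub>deg1 R\<^esub> x) = fst h r \<odot>\<^bsub>deg1 S\<^esub> snd h x) \<and>
     (\<forall>x\<in>carrier (deg1 R). dd S (snd h x) = fst h (dd R x))"

definition dg_comp :: "('c \<Rightarrow> 'g) \<times> ('e \<Rightarrow> 'i) \<Rightarrow> ('a \<Rightarrow> 'c) \<times> ('b \<Rightarrow> 'e) \<Rightarrow> ('a \<Rightarrow> 'g) \<times> ('b \<Rightarrow> 'i)" where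
  "dg_comp k h = (fst k \<circ> fst h, snd k \<circ> snd h)"

definition dg_eq :: "('a, 'b) dgr \<Rightarrow> ('a \<Rightarrow> 'c) \<times> ('b \<Rightarrow> 'e) \<Rightarrow> ('a \<Rightarrow> 'c) \<times> ('b \<Rightarrow> 'e) \<Rightarrow> bool" where
  "dg_eq R h k \<longleftrightarrow> (\<forall>r\<in>carrier (deg0 R). fst h r = fst k r) \<and>
                    (\<forall>x\<in>carrier (deg1 R). snd h x = snd k x)"

definition dg_cycles :: "('a, 'b) dgr \<Rightarrow> 'b set" where
  "dg_cycles R = {x \<in> carrier (deg1 R). dd R x = \<zero>\<^bsub>deg0 R\<^esub>}"

text \<open>Quasi-isomorphism: the induced maps on ker d and on coker d = R^0 / d(R^{-1})
  are bijective (they are automatically linear).\<close>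

definition quasi_iso :: "('a, 'b) dgr \<Rightarrow> ('c, 'e) dgr \<Rightarrow> ('a \<Rightarrow> 'c) \<times> ('b \<Rightarrow> 'e) \<Rightarrow> bool" where
  "quasi_iso R S h \<longleftrightarrow> dg_hom R S h \<and>
     bij_betw (snd h) (dg_cycles R) (dg_cycles S) \<and>
     (\<forall>s\<in>carrier (deg0 S). \<exists>r\<in>carrier (deg0 R). \<exists>y\<in>carrier (deg1 S).
        s = fst h r \<oplus>\<^bsub>deg0 S\<^esub> dd S y) \<and>
     (\<forall>r\<in>carrier (deg0 R). fst h r \<in> dd S ` carrier (deg1 S) \<longrightarrow> r \<in> dd R ` carrier (deg1 R))"

definition dg_surj :: "('a, 'b) dgr \<Rightarrow> ('c, 'e) dgr \<Rightarrow> ('a \<Rightarrow> 'c) \<times> ('b \<Rightarrow> 'e) \<Rightarrow> bool" where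
  "dg_surj R S h \<longleftrightarrow> fst h ` carrier (deg0 R) = carrier (deg0 S) \<and>
                     snd h ` carrier (deg1 R) = carrier (deg1 S)"

definition dg_ideal :: "('a, 'b) dgr \<Rightarrow> 'a set \<times> 'b set \<Rightarrow> bool" where
  "dg_ideal R J \<longleftrightarrow>
     ideal (fst J) (deg0 R) \<and>
     subgroup (snd J) (add_monoid (deg1 R)) \<and>
     (\<forall>r\<in>carrier (deg0 R). \<forall>x\<in>snd J. r \<odot>\<^bsub>deg1 R\<^esub> x \<in> snd J) \<and>
     (\<forall>a\<in>fst J. \<forall>x\<in>carrier (deg1 R). a \<odot>\<^bsub>deg1 R\<^esub> x \<in> snd J) \<and>
     dd R ` snd J \<subseteq> fst J"

definition dg_ideal_gen :: "('a, 'b) dgr \<Rightarrow> 'b set \<Rightarrow> 'a set \<times> 'b set" where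
  "dg_ideal_gen R K =
     (\<Inter>{fst J | J. dg_ideal R J \<and> K \<subseteq> snd J}, \<Inter>{snd J | J. dg_ideal R J \<and> K \<subseteq> snd J})"

definition dg_acyclic :: "('a, 'b) dgr \<Rightarrow> 'a set \<times> 'b set \<Rightarrow> bool" where
  "dg_acyclic R J \<longleftrightarrow>
     {x \<in> snd J. dd R x = \<zero>\<^bsub>deg0 R\<^esub>} = {\<zero>\<^bsub>deg1 R\<^esub>} \<and> fst J \<subseteq> dd R ` snd J"

definition dg_kernel :: "('a, 'b) dgr \<Rightarrow> ('c, 'e) dgr \<Rightarrow> ('a \<Rightarrow> 'c) \<times> ('b \<Rightarrow> 'e) \<Rightarrow> 'a set \<times> 'b set" where
  "dg_kernel R S h =
     ({r \<in> carrier (deg0 R). fst h r = \<zero>\<^bsub>deg0 S\<^esub>}, {x \<in> carrier (deg1 R). snd h x = \<zero>\<^bsub>deg1 S\<^esub>})"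

definition quot_module :: "('a, 'b) dgr \<Rightarrow> 'b set \<Rightarrow> ('a set, 'b set) module" where
  "quot_module R J1 =
     \<lparr> carrier = a_rcosets\<^bsub>deg1 R\<^esub> J1,
       monoid.mult = undefined, one = undefined,
       ring.zero = J1, ring.add = set_add (deg1 R),
       module.smult = (\<lambda>A B. a_r_coset (deg1 R) J1 (smult (deg1 R) (SOME r. r \<in> A) (SOME y. y \<in> B))) \<rparr>"

definition dg_quot :: "('a, 'b) dgr \<Rightarrow> 'a set \<times> 'b set \<Rightarrow> ('a set, 'b set) dgr" where
  "dg_quot R J =
     \<lparr> deg0 = deg0 R Quot fst J,
       deg1 = quot_module R (snd J),
       dd = (\<lambda>B. a_r_coset (deg0 R) (fst J) (dd R (SOME y. y \<in> B))) \<rparr>"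

text \<open>The quotient map R -> R/J, and the map R/J -> S induced by h (for J \<subseteq> ker h).\<close>

definition dg_quot_map :: "('a, 'b) dgr \<Rightarrow> 'a set \<times> 'b set \<Rightarrow> ('a \<Rightarrow> 'a set) \<times> ('b \<Rightarrow> 'b set)" where
  "dg_quot_map R J = ((\<lambda>r. fst J +>\<^bsub>deg0 R\<^esub> r), (\<lambda>x. snd J +>\<^bsub>deg1 R\<^esub> x))"

definition dg_induced :: "('a \<Rightarrow> 'c) \<times> ('b \<Rightarrow> 'e) \<Rightarrow> ('a set \<Rightarrow> 'c) \<times> ('b set \<Rightarrow> 'e)" where
  "dg_induced h = ((\<lambda>A. fst h (SOME r. r \<in> A)), (\<lambda>B. snd h (SOME y. y \<in> B)))"

definition corr :: "('a, 'b) dgr \<Rightarrow> ('c, 'e) dgr \<Rightarrow> ('g, 'i) dgr \<Rightarrow>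
    ('c \<Rightarrow> 'a) \<times> ('e \<Rightarrow> 'b) \<Rightarrow> ('c \<Rightarrow> 'g) \<times> ('e \<Rightarrow> 'i) \<Rightarrow> bool" where
  "corr R1 R12 R2 f g \<longleftrightarrow> dgring R1 \<and> dgring R12 \<and> dgring R2 \<and>
     dg_hom R12 R1 f \<and> dg_hom R12 R2 g"

definition admissible :: "('a, 'b) dgr \<Rightarrow> ('c, 'e) dgr \<Rightarrow> ('g, 'i) dgr \<Rightarrow>
    ('c \<Rightarrow> 'a) \<times> ('e \<Rightarrow> 'b) \<Rightarrow> ('c \<Rightarrow> 'g) \<times> ('e \<Rightarrow> 'i) \<Rightarrow> bool" where
  "admissible R1 R12 R2 f g \<longleftrightarrow> corr R1 R12 R2 f g \<and> quasi_iso R12 R1 f \<and>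
     bij_betw (\<lambda>x. (snd f x, snd g x)) (carrier (deg1 R12)) (carrier (deg1 R1) \<times> carrier (deg1 R2))"

definition weakly_admissible :: "('a, 'b) dgr \<Rightarrow> ('c, 'e) dgr \<Rightarrow> ('g, 'i) dgr \<Rightarrow>
    ('c \<Rightarrow> 'a) \<times> ('e \<Rightarrow> 'b) \<Rightarrow> ('c \<Rightarrow> 'g) \<times> ('e \<Rightarrow> 'i) \<Rightarrow> bool" where
  "weakly_admissible R1 R12 R2 f g \<longleftrightarrow> corr R1 R12 R2 f g \<and> quasi_iso R12 R1 f \<and>
     (\<lambda>x. (snd f x, snd g x)) ` carrier (deg1 R12) = carrier (deg1 R1) \<times> carrier (deg1 R2)"

definition anamorphism :: "('a, 'b) dgr \<Rightarrow> ('c, 'e) dgr \<Rightarrow> ('g, 'i) dgr \<Rightarrow>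
    ('c \<Rightarrow> 'a) \<times> ('e \<Rightarrow> 'b) \<Rightarrow> ('c \<Rightarrow> 'g) \<times> ('e \<Rightarrow> 'i) \<Rightarrow> bool" where
  "anamorphism R1 R12 R2 f g \<longleftrightarrow> corr R1 R12 R2 f g \<and> quasi_iso R12 R1 f \<and> dg_surj R12 R1 f"

definition corr_mor :: "('a, 'b) dgr \<Rightarrow> ('g, 'i) dgr \<Rightarrow>
    ('c, 'e) dgr \<Rightarrow> ('c \<Rightarrow> 'a) \<times> ('e \<Rightarrow> 'b) \<Rightarrow> ('c \<Rightarrow> 'g) \<times> ('e \<Rightarrow> 'i) \<Rightarrow>
    ('k, 'l) dgr \<Rightarrow> ('k \<Rightarrow> 'a) \<times> ('l \<Rightarrow> 'b) \<Rightarrow> ('k \<Rightarrow> 'g) \<times> ('l \<Rightarrow> 'i) \<Rightarrow>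
    ('c \<Rightarrow> 'k) \<times> ('e \<Rightarrow> 'l) \<Rightarrow> bool" where
  "corr_mor R1 R2 R12 f g S f' g' h \<longleftrightarrow> dg_hom R12 S h \<and>
     dg_eq R12 (dg_comp f' h) f \<and> dg_eq R12 (dg_comp g' h) g"

text \<open>Adm: the left adjoint of the inclusion of admissible correspondences into
  anamorphisms from R1 to R2.\<close>

definition is_Adm :: "('a, 'b) dgr \<Rightarrow> ('g, 'i) dgr \<Rightarrow>
    ('c, 'e) dgr \<Rightarrow> ('c \<Rightarrow> 'a) \<times> ('e \<Rightarrow> 'b) \<Rightarrow> ('c \<Rightarrow> 'g) \<times> ('e \<Rightarrow> 'i) \<Rightarrow>
    ('k, 'l) dgr \<Rightarrow> ('k \<Rightarrow> 'a) \<times> ('l \<Rightarrow> 'b) \<Rightarrow> ('k \<Rightarrow> 'g) \<times> ('l \<Rightarrow> 'i) \<Rightarrow>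
    ('c \<Rightarrow> 'k) \<times> ('e \<Rightarrow> 'l) \<Rightarrow> ('m, 'n) dgr itself \<Rightarrow> bool" where
  "is_Adm R1 R2 R12 f g T f' g' u (_ :: ('m, 'n) dgr itself) \<longleftrightarrow>
     anamorphism R1 R12 R2 f g \<and>
     admissible R1 T R2 f' g' \<and>
     corr_mor R1 R2 R12 f g T f' g' u \<and>
     (\<forall>(S :: ('m, 'n) dgr) f'' g'' h. admissible R1 S R2 f'' g'' \<and>
        corr_mor R1 R2 R12 f g S f'' g'' h \<longrightarrow>
        (\<exists>k. corr_mor R1 R2 T f' g' S f'' g'' k \<and> dg_eq R12 (dg_comp k u) h \<and>
           (\<forall>k'. corr_mor R1 R2 T f' g' S f'' g'' k' \<and> dg_eq R12 (dg_comp k' u) h \<longrightarrow>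
                 dg_eq T k' k)))"

end

theory Submission
  imports Defs
begin

text \<open>
  Weak admissibility makes \<open>f\<close> surjective in degree -1, and the cokernel condition of the
  quasi-isomorphism \<open>f\<close> then gives surjectivity in degree 0. A degree-0 element \<open>r\<close> of
  \<open>ker f\<close> is a boundary \<open>d y\<close> (injectivity on cokernels); correcting \<open>y\<close> by a cycle
  with the same image (surjectivity on cycles) puts it into \<open>ker f\<close>, and the cycles of
  \<open>ker f\<close> vanish by injectivity on cycles. So \<open>ker f\<close> is acyclic.

  The joint kernel \<open>K\<close> of \<open>f\<close> and \<open>g\<close> in degree -1 is an \<open>R\<^sup>0\<close>-submodule, so
  \<open>(d K, K)\<close> is already a DG ideal, hence the one generated by \<open>K\<close>; it lies in
  \<open>ker f\<close> and is therefore acyclic. Dividing out an acyclic DG ideal on which \<open>f\<close>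
  vanishes keeps \<open>f\<close> a quasi-isomorphism, and dividing out \<open>K\<close> makes the degree -1
  map to \<open>R\<^sub>1\<^sup>-\<^sup>1 \<times> R\<^sub>2\<^sup>-\<^sup>1\<close> injective, so \<open>R\<^sub>1\<^sub>2/I\<close> is admissible.
  A morphism into an admissible correspondence vanishes on \<open>K\<close> (its own degree -1 map
  into the product is injective), hence on \<open>d K\<close>, so it factors through the quotient
  map, uniquely since the quotient map is surjective.
\<close>

locale dg_ring =
  fixes R :: "('a, 'b) dgr"
  assumes dgring: "dgring R"
begin

sublocale module "deg0 R" "deg1 R"
  using dgring by (simp add: dgring_def)

lemma dd_closed [intro, simp]: "x \<in> carrier (deg1 R) \<Longrightarrow> dd R x \<in> carrier (deg0 R)"
  using dgring by (auto simp: dgring_def)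

lemma dd_add:
  "x \<in> carrier (deg1 R) \<Longrightarrow> y \<in> carrier (deg1 R) \<Longrightarrow>
    dd R (x \<oplus>\<^bsub>deg1 R\<^esub> y) = dd R x \<oplus>\<^bsub>deg0 R\<^esub> dd R y"
  using dgring by (simp add: dgring_def)

lemma dd_smult:
  "r \<in> carrier (deg0 R) \<Longrightarrow> x \<in> carrier (deg1 R) \<Longrightarrow>
    dd R (r \<odot>\<^bsub>deg1 R\<^esub> x) = r \<otimes>\<^bsub>deg0 R\<^esub> dd R x"
  using dgring by (simp add: dgring_def)

lemma dd_smult_comm:
  "x \<in> carrier (deg1 R) \<Longrightarrow> y \<in> carrier (deg1 R) \<Longrightarrow>
    dd R x \<odot>\<^bsub>deg1 R\<^esub> y = dd R y \<odot>\<^bsub>deg1 R\<^esub> x"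
  using dgring by (simp add: dgring_def)

lemma dd_zero [simp]: "dd R \<zero>\<^bsub>deg1 R\<^esub> = \<zero>\<^bsub>deg0 R\<^esub>"
  using dd_smult[of "\<zero>\<^bsub>deg0 R\<^esub>" "\<zero>\<^bsub>deg1 R\<^esub>"] by simp

lemma dd_minus:
  assumes "x \<in> carrier (deg1 R)"
  shows "dd R (\<ominus>\<^bsub>deg1 R\<^esub> x) = \<ominus>\<^bsub>deg0 R\<^esub> dd R x"
  using dd_smult[of "\<ominus>\<^bsub>deg0 R\<^esub> \<one>\<^bsub>deg0 R\<^esub>" x] assms
  by (simp add: smult_l_minus l_minus)

end

locale dg_ring_hom = R: dg_ring R + S: dg_ring S
  for R :: "('a, 'b) dgr" and S :: "('c, 'e) dgr" +
  fixes h :: "('a \<Rightarrow> 'c) \<times> ('b \<Rightarrow> 'e)"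
  assumes dg_hom: "dg_hom R S h"
begin

sublocale ring_hom_cring "deg0 R" "deg0 S" "fst h"
  using dg_hom by unfold_locales (simp add: dg_hom_def)

lemma hom1_closed [intro, simp]: "x \<in> carrier (deg1 R) \<Longrightarrow> snd h x \<in> carrier (deg1 S)"
  using dg_hom by (auto simp: dg_hom_def)

lemma hom1_add:
  "x \<in> carrier (deg1 R) \<Longrightarrow> y \<in> carrier (deg1 R) \<Longrightarrow>
    snd h (x \<oplus>\<^bsub>deg1 R\<^esub> y) = snd h x \<oplus>\<^bsub>deg1 S\<^esub> snd h y"
  using dg_hom by (simp add: dg_hom_def)

lemma hom1_smult:
  "r \<in> carrier (deg0 R) \<Longrightarrow> x \<in> carrier (deg1 R) \<Longrightarrow>
    snd h (r \<odot>\<^bsub>deg1 R\<^esub> x) = fst h r \<odot>\<^bsub>deg1 S\<^esub> snd h x"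
  using dg_hom by (simp add: dg_hom_def)

lemma hom1_dd: "x \<in> carrier (deg1 R) \<Longrightarrow> dd S (snd h x) = fst h (dd R x)"
  using dg_hom by (simp add: dg_hom_def)

lemma hom1_zero [simp]: "snd h \<zero>\<^bsub>deg1 R\<^esub> = \<zero>\<^bsub>deg1 S\<^esub>"
  using hom1_smult[of "\<zero>\<^bsub>deg0 R\<^esub>" "\<zero>\<^bsub>deg1 R\<^esub>"] by simp

lemma hom1_minus:
  assumes "x \<in> carrier (deg1 R)"
  shows "snd h (\<ominus>\<^bsub>deg1 R\<^esub> x) = \<ominus>\<^bsub>deg1 S\<^esub> snd h x"
  using hom1_smult[of "\<ominus>\<^bsub>deg0 R\<^esub> \<one>\<^bsub>deg0 R\<^esub>" x] assms
  by (simp add: R.smult_l_minus S.smult_l_minus)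

lemma hom1_eq_iff:
  assumes "x \<in> carrier (deg1 R)" "y \<in> carrier (deg1 R)"
  shows "snd h x = snd h y \<longleftrightarrow> snd h (x \<oplus>\<^bsub>deg1 R\<^esub> \<ominus>\<^bsub>deg1 R\<^esub> y) = \<zero>\<^bsub>deg1 S\<^esub>"
proof -
  have "snd h (x \<oplus>\<^bsub>deg1 R\<^esub> \<ominus>\<^bsub>deg1 R\<^esub> y) = snd h x \<oplus>\<^bsub>deg1 S\<^esub> \<ominus>\<^bsub>deg1 S\<^esub> snd h y"
    using assms by (simp add: hom1_add hom1_minus)
  then show ?thesis
    using assms by (metis S.M.minus_equality S.M.minus_minus S.M.r_neg S.M.a_inv_closed hom1_closed)
qed

lemma dg_surj_if_quasi_iso:
  assumes qis: "quasi_iso R S h" and surj1: "snd h ` carrier (deg1 R) = carrier (deg1 S)"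
  shows "dg_surj R S h"
proof -
  have "s \<in> fst h ` carrier (deg0 R)" if s_carrier: "s \<in> carrier (deg0 S)" for s
  proof -
    obtain r y where r: "r \<in> carrier (deg0 R)" and y: "y \<in> carrier (deg1 S)"
      and s: "s = fst h r \<oplus>\<^bsub>deg0 S\<^esub> dd S y"
      using qis s_carrier by (auto simp: quasi_iso_def)
    obtain x where x: "x \<in> carrier (deg1 R)" "y = snd h x"
      using y surj1 by blast
    have "s = fst h (r \<oplus>\<^bsub>deg0 R\<^esub> dd R x)"
      using r x s by (simp add: hom1_dd)
    moreover have "r \<oplus>\<^bsub>deg0 R\<^esub> dd R x \<in> carrier (deg0 R)"
      using r x by simp
    ultimately show ?thesis
      by blast
  qed
  then show ?thesis
    using surj1 by (auto simp: dg_surj_def)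
qed

lemma cycle_eq_zero_if_quasi_iso:
  assumes "quasi_iso R S h" "x \<in> carrier (deg1 R)" "dd R x = \<zero>\<^bsub>deg0 R\<^esub>" "snd h x = \<zero>\<^bsub>deg1 S\<^esub>"
  shows "x = \<zero>\<^bsub>deg1 R\<^esub>"
proof -
  have "inj_on (snd h) (dg_cycles R)"
    using assms(1) by (simp add: quasi_iso_def bij_betw_def)
  moreover have "snd h x = snd h \<zero>\<^bsub>deg1 R\<^esub>"
    using assms(4) by simp
  moreover have "x \<in> dg_cycles R" "\<zero>\<^bsub>deg1 R\<^esub> \<in> dg_cycles R"
    using assms(2,3) by (auto simp: dg_cycles_def)
  ultimately show ?thesis
    by (rule inj_onD)
qed

lemma kernel_acyclic_if_quasi_iso:
  assumes qis: "quasi_iso R S h"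
  shows "dg_acyclic R (dg_kernel R S h)"
  unfolding dg_acyclic_def dg_kernel_def fst_conv snd_conv
proof
  show "{x \<in> {x \<in> carrier (deg1 R). snd h x = \<zero>\<^bsub>deg1 S\<^esub>}. dd R x = \<zero>\<^bsub>deg0 R\<^esub>} = {\<zero>\<^bsub>deg1 R\<^esub>}"
    using cycle_eq_zero_if_quasi_iso[OF qis] by auto
  show "{r \<in> carrier (deg0 R). fst h r = \<zero>\<^bsub>deg0 S\<^esub>} \<subseteq> dd R ` {x \<in> carrier (deg1 R). snd h x = \<zero>\<^bsub>deg1 S\<^esub>}"
  proof
    fix r assume "r \<in> {r \<in> carrier (deg0 R). fst h r = \<zero>\<^bsub>deg0 S\<^esub>}"
    then have r: "r \<in> carrier (deg0 R)" "fst h r = dd S \<zero>\<^bsub>deg1 S\<^esub>" by auto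
    then have "fst h r \<in> dd S ` carrier (deg1 S)"
      using S.M.zero_closed by blast
    then obtain y where y: "y \<in> carrier (deg1 R)" "r = dd R y"
      using qis r(1) by (auto simp: quasi_iso_def)
    have "snd h y \<in> dg_cycles S"
      using y r by (simp add: dg_cycles_def hom1_dd)
    moreover have "dg_cycles S = snd h ` dg_cycles R"
      using qis by (simp add: quasi_iso_def bij_betw_def)
    ultimately obtain z where z: "z \<in> dg_cycles R" "snd h y = snd h z"
      by blast
    then have zc: "z \<in> carrier (deg1 R)" "dd R z = \<zero>\<^bsub>deg0 R\<^esub>"
      by (auto simp: dg_cycles_def)
    have "snd h (y \<oplus>\<^bsub>deg1 R\<^esub> \<ominus>\<^bsub>deg1 R\<^esub> z) = \<zero>\<^bsub>deg1 S\<^esub>"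
      using hom1_eq_iff[OF y(1) zc(1)] z(2) by simp
    moreover have "dd R (y \<oplus>\<^bsub>deg1 R\<^esub> \<ominus>\<^bsub>deg1 R\<^esub> z) = r"
      using y zc by (simp add: R.dd_add R.dd_minus)
    moreover have "y \<oplus>\<^bsub>deg1 R\<^esub> \<ominus>\<^bsub>deg1 R\<^esub> z \<in> carrier (deg1 R)"
      using y(1) zc(1) by simp
    ultimately show "r \<in> dd R ` {x \<in> carrier (deg1 R). snd h x = \<zero>\<^bsub>deg1 S\<^esub>}"
      by (auto intro: image_eqI[where x = "y \<oplus>\<^bsub>deg1 R\<^esub> \<ominus>\<^bsub>deg1 R\<^esub> z"])
  qed
qed

end

lemma dg_ring_homI: "dg_ring R \<Longrightarrow> dg_ring S \<Longrightarrow> dg_hom R S h \<Longrightarrow> dg_ring_hom R S h"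
  by (simp add: dg_ring_hom_def dg_ring_hom_axioms_def)

context dg_ring
begin

lemma group_hom_dd: "group_hom (add_monoid (deg1 R)) (add_monoid (deg0 R)) (dd R)"
  by (intro group_hom.intro group_hom_axioms.intro M.a_group R.a_group) (auto simp: hom_def dd_add)

lemma dg_ideal_dd_image:
  assumes "submodule K (deg0 R) (deg1 R)"
  shows "dg_ideal R (dd R ` K, K)"
proof -
  interpret K: submodule K "deg0 R" "deg1 R" by (rule assms)
  have K_carrier: "K \<subseteq> carrier (deg1 R)"
    using K.subset by simp
  have mult_closed: "x \<otimes>\<^bsub>deg0 R\<^esub> dd R k \<in> dd R ` K" if k: "k \<in> K" and x: "x \<in> carrier (deg0 R)" for k x
  proof -
    have "k \<in> carrier (deg1 R)"
      using k K_carrier by blast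
    then have "x \<otimes>\<^bsub>deg0 R\<^esub> dd R k = dd R (x \<odot>\<^bsub>deg1 R\<^esub> k)"
      using x by (simp add: dd_smult)
    then show ?thesis
      by (rule image_eqI[OF _ K.smult_closed[OF x k]])
  qed
  have "ideal (dd R ` K) (deg0 R)"
  proof (rule idealI)
    show "subgroup (dd R ` K) (add_monoid (deg0 R))"
      by (rule group_hom.subgroup_img_is_subgroup[OF group_hom_dd K.subgroup_axioms])
    show "x \<otimes>\<^bsub>deg0 R\<^esub> a \<in> dd R ` K" if "a \<in> dd R ` K" "x \<in> carrier (deg0 R)" for a x
      using that mult_closed by blast
    show "a \<otimes>\<^bsub>deg0 R\<^esub> x \<in> dd R ` K" if a: "a \<in> dd R ` K" and x: "x \<in> carrier (deg0 R)" for a x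
    proof -
      have "a \<in> carrier (deg0 R)"
        using a K_carrier by auto
      then show ?thesis
        using a x mult_closed by (auto simp only: m_comm)
    qed
  qed (rule R.ring_axioms)
  moreover have "dd R k \<odot>\<^bsub>deg1 R\<^esub> x \<in> K" if "k \<in> K" "x \<in> carrier (deg1 R)" for k x
  proof -
    have "dd R k \<odot>\<^bsub>deg1 R\<^esub> x = dd R x \<odot>\<^bsub>deg1 R\<^esub> k"
      using that K_carrier by (auto intro: dd_smult_comm)
    then show ?thesis
      using that by simp
  qed
  ultimately show ?thesis
    unfolding dg_ideal_def fst_conv snd_conv using K.subgroup_axioms K.smult_closed by blast
qed

lemma dg_ideal_gen_submodule:
  assumes "submodule K (deg0 R) (deg1 R)"
  shows "dg_ideal_gen R K = (dd R ` K, K)"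
proof -
  let ?ideals = "{J. dg_ideal R J \<and> K \<subseteq> snd J}"
  have member: "(dd R ` K, K) \<in> ?ideals"
    using dg_ideal_dd_image[OF assms] by simp
  have least: "dd R ` K \<subseteq> fst J \<and> K \<subseteq> snd J" if "J \<in> ?ideals" for J
    using that unfolding dg_ideal_def by blast
  have "\<Inter>{fst J | J. J \<in> ?ideals} = dd R ` K"
  proof (rule antisym)
    show "\<Inter>{fst J | J. J \<in> ?ideals} \<subseteq> dd R ` K"
      using member by (intro Inter_lower CollectI exI[of _ "(dd R ` K, K)"]) simp
    show "dd R ` K \<subseteq> \<Inter>{fst J | J. J \<in> ?ideals}"
      using least by (intro Inter_greatest) blast
  qed
  moreover have "\<Inter>{snd J | J. J \<in> ?ideals} = K"
  proof (rule antisym)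
    show "\<Inter>{snd J | J. J \<in> ?ideals} \<subseteq> K"
      using member by (intro Inter_lower CollectI exI[of _ "(dd R ` K, K)"]) simp
    show "K \<subseteq> \<Inter>{snd J | J. J \<in> ?ideals}"
      using least by (intro Inter_greatest) blast
  qed
  ultimately show ?thesis
    by (simp add: dg_ideal_gen_def)
qed

lemma dg_acyclic_dd_image:
  assumes "dg_acyclic R J" "K \<subseteq> snd J" "\<zero>\<^bsub>deg1 R\<^esub> \<in> K"
  shows "dg_acyclic R (dd R ` K, K)"
proof -
  have "{x \<in> K. dd R x = \<zero>\<^bsub>deg0 R\<^esub>} \<subseteq> {x \<in> snd J. dd R x = \<zero>\<^bsub>deg0 R\<^esub>}"
    using assms(2) by blast
  then have "{x \<in> K. dd R x = \<zero>\<^bsub>deg0 R\<^esub>} = {\<zero>\<^bsub>deg1 R\<^esub>}"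
    using assms(1,3) unfolding dg_acyclic_def by auto
  then show ?thesis
    by (simp add: dg_acyclic_def)
qed

end

locale dg_quotient = dg_ring R for R :: "('a, 'b) dgr" +
  fixes J0 :: "'a set" and J1 :: "'b set"
  assumes dg_ideal: "dg_ideal R (J0, J1)"
begin

abbreviation Q :: "('a set, 'b set) dgr" where "Q \<equiv> dg_quot R (J0, J1)"
abbreviation coset0 :: "'a \<Rightarrow> 'a set" where "coset0 r \<equiv> J0 +>\<^bsub>deg0 R\<^esub> r"
abbreviation coset1 :: "'b \<Rightarrow> 'b set" where "coset1 x \<equiv> J1 +>\<^bsub>deg1 R\<^esub> x"

sublocale J0: ideal J0 "deg0 R"
  using dg_ideal by (simp add: dg_ideal_def)

sublocale J1: abelian_subgroup J1 "deg1 R"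
  using dg_ideal M.abelian_group_axioms
  by (intro abelian_subgroupI3) (simp_all add: dg_ideal_def additive_subgroup_def)

lemma J0_smult_mem: "a \<in> J0 \<Longrightarrow> x \<in> carrier (deg1 R) \<Longrightarrow> a \<odot>\<^bsub>deg1 R\<^esub> x \<in> J1"
  and smult_J1_mem: "r \<in> carrier (deg0 R) \<Longrightarrow> x \<in> J1 \<Longrightarrow> r \<odot>\<^bsub>deg1 R\<^esub> x \<in> J1"
  and dd_J1_mem: "x \<in> J1 \<Longrightarrow> dd R x \<in> J0"
  using dg_ideal by (auto simp: dg_ideal_def)

lemma deg0_quot [simp]: "deg0 Q = deg0 R Quot J0"
  by (simp add: dg_quot_def)

lemma carrier_quot0: "carrier (deg0 R Quot J0) = coset0 ` carrier (deg0 R)"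
  by (auto simp: FactRing_def A_RCOSETS_def')

lemma carrier_quot1: "carrier (deg1 Q) = coset1 ` carrier (deg1 R)"
  by (auto simp: dg_quot_def quot_module_def A_RCOSETS_def')

lemma coset0_eq_J0_iff: "r \<in> carrier (deg0 R) \<Longrightarrow> coset0 r = J0 \<longleftrightarrow> r \<in> J0"
  using J0.a_rcos_self J0.a_rcos_const by blast

lemma coset1_eq_iff:
  assumes "x \<in> carrier (deg1 R)" "y \<in> carrier (deg1 R)"
  shows "coset1 x = coset1 y \<longleftrightarrow> x \<oplus>\<^bsub>deg1 R\<^esub> \<ominus>\<^bsub>deg1 R\<^esub> y \<in> J1"
  using J1.a_rcos_module[OF assms(2,1)] J1.a_repr_independence'[of x y]
    J1.a_repr_independenceD[OF assms(1), of y] assms by blast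

lemma some_coset0: "r \<in> carrier (deg0 R) \<Longrightarrow> \<exists>i\<in>J0. (SOME s. s \<in> coset0 r) = i \<oplus>\<^bsub>deg0 R\<^esub> r"
  using someI[of "\<lambda>s. s \<in> coset0 r", OF J0.a_rcos_self] by (simp add: a_r_coset_def')

lemma some_coset1: "x \<in> carrier (deg1 R) \<Longrightarrow> \<exists>k\<in>J1. (SOME y. y \<in> coset1 x) = k \<oplus>\<^bsub>deg1 R\<^esub> x"
  using someI[of "\<lambda>y. y \<in> coset1 x", OF J1.a_rcos_self] by (simp add: a_r_coset_def')

lemma coset0_J0_add: "i \<in> J0 \<Longrightarrow> r \<in> carrier (deg0 R) \<Longrightarrow> coset0 (i \<oplus>\<^bsub>deg0 R\<^esub> r) = coset0 r"
  using J0.a_repr_independence'[OF R.a_rcosI[OF _ J0.a_subset]] by simp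

lemma coset1_J1_add: "k \<in> J1 \<Longrightarrow> x \<in> carrier (deg1 R) \<Longrightarrow> coset1 (k \<oplus>\<^bsub>deg1 R\<^esub> x) = coset1 x"
  using J1.a_repr_independence'[OF M.a_rcosI[OF _ J1.a_subset]] by simp

lemma quot_add0:
  "r \<in> carrier (deg0 R) \<Longrightarrow> s \<in> carrier (deg0 R) \<Longrightarrow>
    coset0 r \<oplus>\<^bsub>deg0 R Quot J0\<^esub> coset0 s = coset0 (r \<oplus>\<^bsub>deg0 R\<^esub> s)"
  using ring_hom_add[OF J0.rcos_ring_hom] by simp

lemma quot_mult0:
  "r \<in> carrier (deg0 R) \<Longrightarrow> s \<in> carrier (deg0 R) \<Longrightarrow>
    coset0 r \<otimes>\<^bsub>deg0 R Quot J0\<^esub> coset0 s = coset0 (r \<otimes>\<^bsub>deg0 R\<^esub> s)"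
  using ring_hom_mult[OF J0.rcos_ring_hom] by simp

lemma quot_one0: "\<one>\<^bsub>deg0 R Quot J0\<^esub> = coset0 \<one>\<^bsub>deg0 R\<^esub>"
  by (simp add: FactRing_def)

lemma quot_zero0: "\<zero>\<^bsub>deg0 R Quot J0\<^esub> = J0"
  by (simp add: FactRing_def)

lemma quot_add1:
  "x \<in> carrier (deg1 R) \<Longrightarrow> y \<in> carrier (deg1 R) \<Longrightarrow>
    coset1 x \<oplus>\<^bsub>deg1 Q\<^esub> coset1 y = coset1 (x \<oplus>\<^bsub>deg1 R\<^esub> y)"
  by (simp add: dg_quot_def quot_module_def J1.a_rcos_sum)

lemma smult_quot1:
  "A \<odot>\<^bsub>deg1 Q\<^esub> B = coset1 ((SOME r. r \<in> A) \<odot>\<^bsub>deg1 R\<^esub> (SOME y. y \<in> B))"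
  by (simp add: dg_quot_def quot_module_def)

lemma quot_smult:
  assumes r: "r \<in> carrier (deg0 R)" and x: "x \<in> carrier (deg1 R)"
  shows "coset0 r \<odot>\<^bsub>deg1 Q\<^esub> coset1 x = coset1 (r \<odot>\<^bsub>deg1 R\<^esub> x)"
proof -
  obtain i where i: "i \<in> J0" "(SOME s. s \<in> coset0 r) = i \<oplus>\<^bsub>deg0 R\<^esub> r"
    using some_coset0[OF r] by blast
  obtain k where k: "k \<in> J1" "(SOME y. y \<in> coset1 x) = k \<oplus>\<^bsub>deg1 R\<^esub> x"
    using some_coset1[OF x] by blast
  \<comment> \<open>The representatives picked by \<open>SOME\<close> differ from \<open>r, x\<close> by elements of \<open>J0, J1\<close>;
    the resulting error term lies in \<open>J1\<close> by the DG-ideal axioms.\<close>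
  let ?j = "i \<odot>\<^bsub>deg1 R\<^esub> (k \<oplus>\<^bsub>deg1 R\<^esub> x) \<oplus>\<^bsub>deg1 R\<^esub> r \<odot>\<^bsub>deg1 R\<^esub> k"
  have j: "?j \<in> J1"
    using J0_smult_mem[OF i(1)] smult_J1_mem[OF r k(1)] k x by simp
  have "coset0 r \<odot>\<^bsub>deg1 Q\<^esub> coset1 x = coset1 ((i \<oplus>\<^bsub>deg0 R\<^esub> r) \<odot>\<^bsub>deg1 R\<^esub> (k \<oplus>\<^bsub>deg1 R\<^esub> x))"
    by (simp only: smult_quot1 i k)
  also have "\<dots> = coset1 (?j \<oplus>\<^bsub>deg1 R\<^esub> r \<odot>\<^bsub>deg1 R\<^esub> x)"
    using i k r x by (simp add: smult_l_distr smult_r_distr M.a_ac)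
  also have "\<dots> = coset1 (r \<odot>\<^bsub>deg1 R\<^esub> x)"
    using j r x by (simp add: coset1_J1_add)
  finally show ?thesis .
qed

lemma quot_dd:
  assumes x: "x \<in> carrier (deg1 R)"
  shows "dd Q (coset1 x) = coset0 (dd R x)"
proof -
  obtain k where k: "k \<in> J1" "(SOME y. y \<in> coset1 x) = k \<oplus>\<^bsub>deg1 R\<^esub> x"
    using some_coset1[OF x] by blast
  have "dd Q (coset1 x) = coset0 (dd R (k \<oplus>\<^bsub>deg1 R\<^esub> x))"
    using k by (simp add: dg_quot_def)
  also have "\<dots> = coset0 (dd R x)"
    using k x dd_J1_mem[OF k(1)] by (simp add: dd_add coset0_J0_add)
  finally show ?thesis .
qed

lemma quot_zero1: "\<zero>\<^bsub>deg1 Q\<^esub> = coset1 \<zero>\<^bsub>deg1 R\<^esub>"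
  by (simp add: dg_quot_def quot_module_def J1.a_rcos_const)

lemma abelian_group_quot1: "abelian_group (deg1 Q)"
proof (rule abelian_groupI)
  fix A assume "A \<in> carrier (deg1 Q)"
  then obtain x where x: "x \<in> carrier (deg1 R)" "A = coset1 x"
    by (auto simp: carrier_quot1)
  then show "\<exists>B\<in>carrier (deg1 Q). B \<oplus>\<^bsub>deg1 Q\<^esub> A = \<zero>\<^bsub>deg1 Q\<^esub>"
    by (intro bexI[of _ "coset1 (\<ominus>\<^bsub>deg1 R\<^esub> x)"]) (auto simp: carrier_quot1 quot_add1 quot_zero1 M.l_neg)
qed (auto simp: carrier_quot1 quot_add1 quot_zero1 M.a_ac)

lemma module_quot: "module (deg0 Q) (deg1 Q)"
proof (rule moduleI)
  show "cring (deg0 Q)"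
    by (simp add: J0.quotient_is_cring is_cring)
qed (auto simp: carrier_quot0 carrier_quot1 quot_add0 quot_mult0 quot_one0 quot_add1 quot_smult
    abelian_group_quot1 smult_l_distr smult_r_distr smult_assoc1)

lemma dgring_quot: "dg_ring Q"
  unfolding dg_ring_def dgring_def
  using module_quot
  by (auto simp: carrier_quot0 carrier_quot1 quot_add0 quot_mult0 quot_add1 quot_smult quot_dd
      dd_add dd_smult dd_smult_comm J0.quotient_is_cring is_cring)

lemma dg_ring_hom_quot_map: "dg_ring_hom R Q (dg_quot_map R (J0, J1))"
  by (intro dg_ring_homI dg_ring_axioms dgring_quot)
    (auto simp: dg_hom_def dg_quot_map_def J0.rcos_ring_hom carrier_quot1 quot_add1 quot_smult quot_dd)

lemma dg_eq_quotI:
  assumes "\<And>r. r \<in> carrier (deg0 R) \<Longrightarrow> fst k (coset0 r) = fst k' (coset0 r)"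
    and "\<And>x. x \<in> carrier (deg1 R) \<Longrightarrow> snd k (coset1 x) = snd k' (coset1 x)"
  shows "dg_eq Q k k'"
  using assms by (auto simp: dg_eq_def carrier_quot0 carrier_quot1)

lemma cycles_quot:
  assumes "J0 \<subseteq> dd R ` J1"
  shows "dg_cycles Q = coset1 ` dg_cycles R"
proof
  show "coset1 ` dg_cycles R \<subseteq> dg_cycles Q"
    by (auto simp: dg_cycles_def carrier_quot1 quot_dd quot_zero0 J0.a_rcos_const)
  show "dg_cycles Q \<subseteq> coset1 ` dg_cycles R"
  proof
    fix B assume "B \<in> dg_cycles Q"
    then obtain x where x: "x \<in> carrier (deg1 R)" "B = coset1 x" and "coset0 (dd R x) = J0"
      by (auto simp: dg_cycles_def carrier_quot1 quot_dd quot_zero0)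
    then have "dd R x \<in> J0" by (simp add: coset0_eq_J0_iff)
    then obtain k where k: "k \<in> J1" "dd R x = dd R k" using assms by blast
    have kc: "k \<in> carrier (deg1 R)" using k(1) J1.a_subset by blast
    have "\<ominus>\<^bsub>deg1 R\<^esub> k \<oplus>\<^bsub>deg1 R\<^esub> x \<in> dg_cycles R"
      using kc x k(2) by (simp add: dg_cycles_def dd_add dd_minus R.l_neg)
    moreover have "coset1 (\<ominus>\<^bsub>deg1 R\<^esub> k \<oplus>\<^bsub>deg1 R\<^esub> x) = B"
      using x k(1) by (simp add: coset1_J1_add)
    ultimately show "B \<in> coset1 ` dg_cycles R" by blast
  qed
qed

context
  fixes S :: "('c, 'e) dgr" and h :: "('a \<Rightarrow> 'c) \<times> ('b \<Rightarrow> 'e)"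
  assumes h: "dg_ring_hom R S h"
    and h_J0: "\<And>a. a \<in> J0 \<Longrightarrow> fst h a = \<zero>\<^bsub>deg0 S\<^esub>"
    and h_J1: "\<And>x. x \<in> J1 \<Longrightarrow> snd h x = \<zero>\<^bsub>deg1 S\<^esub>"
begin

interpretation h: dg_ring_hom R S h by (rule h)

lemma induced0 [simp]: "r \<in> carrier (deg0 R) \<Longrightarrow> fst (dg_induced h) (coset0 r) = fst h r"
  using some_coset0 h_J0 J0.a_subset by (force simp: dg_induced_def)

lemma induced1 [simp]: "x \<in> carrier (deg1 R) \<Longrightarrow> snd (dg_induced h) (coset1 x) = snd h x"
  using some_coset1 h_J1 J1.a_subset by (force simp: dg_induced_def h.hom1_add)

lemma dg_ring_hom_induced: "dg_ring_hom Q S (dg_induced h)"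
  by (intro dg_ring_homI dgring_quot h.S.dg_ring_axioms)
    (auto simp: dg_hom_def carrier_quot0 carrier_quot1 quot_add0 quot_mult0 quot_one0 quot_add1
      quot_smult quot_dd h.hom1_add h.hom1_smult h.hom1_dd intro!: ring_hom_memI)

lemma induced_comp_quot_map: "dg_eq R (dg_comp (dg_induced h) (dg_quot_map R (J0, J1))) h"
  by (simp add: dg_eq_def dg_comp_def dg_quot_map_def)

lemma dg_eq_induced_if_comp:
  assumes "dg_eq R (dg_comp k (dg_quot_map R (J0, J1))) h"
  shows "dg_eq Q k (dg_induced h)"
  using assms by (intro dg_eq_quotI) (simp_all add: dg_eq_def dg_comp_def dg_quot_map_def)

lemma quasi_iso_induced:
  assumes J0: "J0 \<subseteq> dd R ` J1" and qis: "quasi_iso R S h"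
  shows "quasi_iso Q S (dg_induced h)"
proof -
  interpret h': dg_ring_hom Q S "dg_induced h" by (rule dg_ring_hom_induced)
  have inj: "inj_on (snd h) (dg_cycles R)" and surj: "snd h ` dg_cycles R = dg_cycles S"
    using qis by (auto simp: quasi_iso_def bij_betw_def)
  have cycles: "\<And>z. z \<in> dg_cycles R \<Longrightarrow> z \<in> carrier (deg1 R)"
    by (simp add: dg_cycles_def)
  have "bij_betw (snd (dg_induced h)) (dg_cycles Q) (dg_cycles S)"
    unfolding cycles_quot[OF J0] bij_betw_def
  proof
    show "inj_on (snd (dg_induced h)) (coset1 ` dg_cycles R)"
      using inj cycles by (auto intro!: inj_onI dest: inj_onD)
    show "snd (dg_induced h) ` coset1 ` dg_cycles R = dg_cycles S"
      using surj cycles by (simp add: image_image)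
  qed
  moreover have "\<exists>A\<in>carrier (deg0 Q). \<exists>y\<in>carrier (deg1 S). s = fst (dg_induced h) A \<oplus>\<^bsub>deg0 S\<^esub> dd S y"
    if "s \<in> carrier (deg0 S)" for s
    using qis that by (force simp: quasi_iso_def carrier_quot0)
  moreover have "A \<in> dd Q ` carrier (deg1 Q)"
    if A: "A \<in> carrier (deg0 Q)" and im: "fst (dg_induced h) A \<in> dd S ` carrier (deg1 S)" for A
  proof -
    obtain r where r: "r \<in> carrier (deg0 R)" "A = coset0 r"
      using A by (auto simp: carrier_quot0)
    then obtain y where "y \<in> carrier (deg1 R)" "r = dd R y"
      using qis im by (auto simp: quasi_iso_def)
    then have "A = dd Q (coset1 y)"
      using r by (simp add: quot_dd)
    then show ?thesis
      using \<open>y \<in> carrier (deg1 R)\<close> by (simp add: carrier_quot1)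
  qed
  ultimately show ?thesis
    unfolding quasi_iso_def using h'.dg_hom by blast
qed

end

end

locale dg_corr = R1: dg_ring R1 + R12: dg_ring R12 + R2: dg_ring R2
  for R1 :: "('a, 'b) dgr" and R12 :: "('c, 'e) dgr" and R2 :: "('g, 'i) dgr" +
  fixes f :: "('c \<Rightarrow> 'a) \<times> ('e \<Rightarrow> 'b)" and g :: "('c \<Rightarrow> 'g) \<times> ('e \<Rightarrow> 'i)"
  assumes dg_hom_f: "dg_hom R12 R1 f" and dg_hom_g: "dg_hom R12 R2 g"
begin

lemma dg_ring_hom_f: "dg_ring_hom R12 R1 f"
  and dg_ring_hom_g: "dg_ring_hom R12 R2 g"
  by (intro dg_ring_homI R1.dg_ring_axioms R12.dg_ring_axioms R2.dg_ring_axioms dg_hom_f dg_hom_g)+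

sublocale f: dg_ring_hom R12 R1 f by (rule dg_ring_hom_f)
sublocale g: dg_ring_hom R12 R2 g by (rule dg_ring_hom_g)

definition joint_kernel :: "'e set" where
  "joint_kernel = {x \<in> carrier (deg1 R12). snd f x = \<zero>\<^bsub>deg1 R1\<^esub> \<and> snd g x = \<zero>\<^bsub>deg1 R2\<^esub>}"

lemma zero_mem_joint_kernel: "\<zero>\<^bsub>deg1 R12\<^esub> \<in> joint_kernel"
  by (simp add: joint_kernel_def)

lemma submodule_joint_kernel: "submodule joint_kernel (deg0 R12) (deg1 R12)"
proof (rule R12.submoduleI)
  show "joint_kernel \<subseteq> carrier (deg1 R12)"
    by (auto simp: joint_kernel_def)
  show "\<zero>\<^bsub>deg1 R12\<^esub> \<in> joint_kernel"
    by (rule zero_mem_joint_kernel)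
  show "\<ominus>\<^bsub>deg1 R12\<^esub> x \<in> joint_kernel" if "x \<in> joint_kernel" for x
    using that by (simp add: joint_kernel_def f.hom1_minus g.hom1_minus)
  show "x \<oplus>\<^bsub>deg1 R12\<^esub> y \<in> joint_kernel" if "x \<in> joint_kernel" "y \<in> joint_kernel" for x y
    using that by (simp add: joint_kernel_def f.hom1_add g.hom1_add)
  show "r \<odot>\<^bsub>deg1 R12\<^esub> x \<in> joint_kernel" if "r \<in> carrier (deg0 R12)" "x \<in> joint_kernel" for r x
    using that by (simp add: joint_kernel_def f.hom1_smult g.hom1_smult)
qed

lemma joint_kernel_killed:
  assumes "x \<in> joint_kernel"
  shows "snd f x = \<zero>\<^bsub>deg1 R1\<^esub>" "snd g x = \<zero>\<^bsub>deg1 R2\<^esub>"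
    and "fst f (dd R12 x) = \<zero>\<^bsub>deg0 R1\<^esub>" "fst g (dd R12 x) = \<zero>\<^bsub>deg0 R2\<^esub>"
proof -
  have x: "x \<in> carrier (deg1 R12)"
    and fx: "snd f x = \<zero>\<^bsub>deg1 R1\<^esub>" and gx: "snd g x = \<zero>\<^bsub>deg1 R2\<^esub>"
    using assms by (simp_all add: joint_kernel_def)
  show "snd f x = \<zero>\<^bsub>deg1 R1\<^esub>" "snd g x = \<zero>\<^bsub>deg1 R2\<^esub>"
    by (fact fx, fact gx)
  have "fst f (dd R12 x) = dd R1 (snd f x)"
    by (rule f.hom1_dd[OF x, symmetric])
  then show "fst f (dd R12 x) = \<zero>\<^bsub>deg0 R1\<^esub>"
    by (simp only: fx R1.dd_zero)
  have "fst g (dd R12 x) = dd R2 (snd g x)"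
    by (rule g.hom1_dd[OF x, symmetric])
  then show "fst g (dd R12 x) = \<zero>\<^bsub>deg0 R2\<^esub>"
    by (simp only: gx R2.dd_zero)
qed

lemma diff_mem_joint_kernel:
  assumes "x \<in> carrier (deg1 R12)" "y \<in> carrier (deg1 R12)"
    and "snd f x = snd f y" "snd g x = snd g y"
  shows "x \<oplus>\<^bsub>deg1 R12\<^esub> \<ominus>\<^bsub>deg1 R12\<^esub> y \<in> joint_kernel"
  using assms f.hom1_eq_iff[OF assms(1,2)] g.hom1_eq_iff[OF assms(1,2)]
  unfolding joint_kernel_def by simp

lemma joint_kernel_subset_kernel: "joint_kernel \<subseteq> snd (dg_kernel R12 R1 f)"
  by (auto simp: joint_kernel_def dg_kernel_def)

lemma dg_acyclic_joint_kernel_ideal: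
  assumes "quasi_iso R12 R1 f"
  shows "dg_acyclic R12 (dd R12 ` joint_kernel, joint_kernel)"
  using f.kernel_acyclic_if_quasi_iso[OF assms] joint_kernel_subset_kernel zero_mem_joint_kernel
  by (rule R12.dg_acyclic_dd_image)

text \<open>Once \<open>quot\<close> is interpreted, the simplifier loops on \<open>joint_kernel_def\<close>; below it is
  only unfolded for \<open>blast\<close>.\<close>

sublocale quot: dg_quotient R12 "dd R12 ` joint_kernel" joint_kernel
  using R12.dg_ideal_dd_image[OF submodule_joint_kernel]
  by (intro dg_quotient.intro dg_quotient_axioms.intro R12.dg_ring_axioms)

lemma f_kills_joint_kernel:
  "a \<in> dd R12 ` joint_kernel \<Longrightarrow> fst f a = \<zero>\<^bsub>deg0 R1\<^esub>"
  "x \<in> joint_kernel \<Longrightarrow> snd f x = \<zero>\<^bsub>deg1 R1\<^esub>"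
  using joint_kernel_killed by blast+

lemma g_kills_joint_kernel:
  "a \<in> dd R12 ` joint_kernel \<Longrightarrow> fst g a = \<zero>\<^bsub>deg0 R2\<^esub>"
  "x \<in> joint_kernel \<Longrightarrow> snd g x = \<zero>\<^bsub>deg1 R2\<^esub>"
  using joint_kernel_killed by blast+

lemmas dg_ring_hom_induced_f = quot.dg_ring_hom_induced[OF dg_ring_hom_f f_kills_joint_kernel]
lemmas dg_ring_hom_induced_g = quot.dg_ring_hom_induced[OF dg_ring_hom_g g_kills_joint_kernel]
lemmas induced_f [simp] = quot.induced0[OF dg_ring_hom_f f_kills_joint_kernel]
  quot.induced1[OF dg_ring_hom_f f_kills_joint_kernel]
lemmas induced_g [simp] = quot.induced0[OF dg_ring_hom_g g_kills_joint_kernel]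
  quot.induced1[OF dg_ring_hom_g g_kills_joint_kernel]

lemma bij_betw_induced_pair:
  assumes surj: "(\<lambda>x. (snd f x, snd g x)) ` carrier (deg1 R12) = carrier (deg1 R1) \<times> carrier (deg1 R2)"
  shows "bij_betw (\<lambda>B. (snd (dg_induced f) B, snd (dg_induced g) B))
    (carrier (deg1 quot.Q)) (carrier (deg1 R1) \<times> carrier (deg1 R2))"
  unfolding bij_betw_def quot.carrier_quot1
proof
  show "inj_on (\<lambda>B. (snd (dg_induced f) B, snd (dg_induced g) B)) (quot.coset1 ` carrier (deg1 R12))"
  proof (rule inj_onI)
    fix A B
    assume "A \<in> quot.coset1 ` carrier (deg1 R12)" "B \<in> quot.coset1 ` carrier (deg1 R12)"
      and eq: "(snd (dg_induced f) A, snd (dg_induced g) A) = (snd (dg_induced f) B, snd (dg_induced g) B)"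
    then obtain x y where x: "x \<in> carrier (deg1 R12)" "A = quot.coset1 x"
      and y: "y \<in> carrier (deg1 R12)" "B = quot.coset1 y"
      by blast
    have "snd f x = snd f y" "snd g x = snd g y"
      using eq x y by simp_all
    then have "x \<oplus>\<^bsub>deg1 R12\<^esub> \<ominus>\<^bsub>deg1 R12\<^esub> y \<in> joint_kernel"
      by (rule diff_mem_joint_kernel[OF x(1) y(1)])
    then show "A = B"
      using quot.coset1_eq_iff[OF x(1) y(1)] x(2) y(2) by blast
  qed
  have "(\<lambda>B. (snd (dg_induced f) B, snd (dg_induced g) B)) ` quot.coset1 ` carrier (deg1 R12)
      = (\<lambda>x. (snd f x, snd g x)) ` carrier (deg1 R12)"
    unfolding image_image by (rule image_cong) simp_all
  then show "(\<lambda>B. (snd (dg_induced f) B, snd (dg_induced g) B)) ` quot.coset1 ` carrier (deg1 R12)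
      = carrier (deg1 R1) \<times> carrier (deg1 R2)"
    using surj by simp
qed

lemma admissible_quot:
  assumes wa: "weakly_admissible R1 R12 R2 f g"
  shows "admissible R1 quot.Q R2 (dg_induced f) (dg_induced g)"
proof -
  have "quasi_iso quot.Q R1 (dg_induced f)"
    using wa by (intro quot.quasi_iso_induced[OF dg_ring_hom_f f_kills_joint_kernel])
      (simp_all add: weakly_admissible_def)
  moreover have "dgring quot.Q"
    using quot.dgring_quot by (simp add: dg_ring_def)
  ultimately show ?thesis
    using wa bij_betw_induced_pair dg_ring_hom.dg_hom[OF dg_ring_hom_induced_f]
      dg_ring_hom.dg_hom[OF dg_ring_hom_induced_g]
    by (simp add: admissible_def weakly_admissible_def corr_def)
qed

lemma anamorphism_if_weakly_admissible:
  assumes wa: "weakly_admissible R1 R12 R2 f g"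
  shows "anamorphism R1 R12 R2 f g"
proof -
  have "snd f ` carrier (deg1 R12) = fst ` (\<lambda>x. (snd f x, snd g x)) ` carrier (deg1 R12)"
    by (simp add: image_image)
  also have "\<dots> = carrier (deg1 R1)"
    using wa R2.M.zero_closed by (simp add: weakly_admissible_def, blast)
  finally have "dg_surj R12 R1 f"
    using wa f.dg_surj_if_quasi_iso by (simp add: weakly_admissible_def)
  then show ?thesis
    using wa by (simp add: anamorphism_def weakly_admissible_def)
qed

lemma corr_mor_quot_map:
  "corr_mor R1 R2 R12 f g quot.Q (dg_induced f) (dg_induced g)
    (dg_quot_map R12 (dd R12 ` joint_kernel, joint_kernel))"
  unfolding corr_mor_def
  using dg_ring_hom.dg_hom[OF quot.dg_ring_hom_quot_map]
    quot.induced_comp_quot_map[OF dg_ring_hom_f f_kills_joint_kernel]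
    quot.induced_comp_quot_map[OF dg_ring_hom_g g_kills_joint_kernel]
  by blast

lemma corr_mor_to_admissible_kills_joint_kernel:
  assumes adm: "admissible R1 S R2 f' g'" and mor: "corr_mor R1 R2 R12 f g S f' g' h"
    and x: "x \<in> joint_kernel"
  shows "snd h x = \<zero>\<^bsub>deg1 S\<^esub>"
proof -
  have S: "dg_ring S" and f': "dg_hom S R1 f'" and g': "dg_hom S R2 g'"
    and inj: "inj_on (\<lambda>y. (snd f' y, snd g' y)) (carrier (deg1 S))"
    using adm by (auto simp: admissible_def corr_def bij_betw_def dg_ring_def)
  interpret h: dg_ring_hom R12 S h
    using mor S by (intro dg_ring_homI R12.dg_ring_axioms) (simp_all add: corr_mor_def)
  interpret f': dg_ring_hom S R1 f' by (intro dg_ring_homI S R1.dg_ring_axioms f')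
  interpret g': dg_ring_hom S R2 g' by (intro dg_ring_homI S R2.dg_ring_axioms g')
  have xc: "x \<in> carrier (deg1 R12)"
    using x unfolding joint_kernel_def by blast
  have "snd f' (snd h x) = snd f x" "snd g' (snd h x) = snd g x"
    using mor xc by (auto simp: corr_mor_def dg_eq_def dg_comp_def)
  then have "(snd f' (snd h x), snd g' (snd h x)) = (snd f' \<zero>\<^bsub>deg1 S\<^esub>, snd g' \<zero>\<^bsub>deg1 S\<^esub>)"
    using joint_kernel_killed[OF x] by simp
  then show ?thesis
    using inj_onD[OF inj] h.hom1_closed[OF xc] h.S.M.zero_closed by blast
qed

lemma corr_mor_factors_through_quot:
  assumes adm: "admissible R1 S R2 f' g'" and mor: "corr_mor R1 R2 R12 f g S f' g' h"
  shows "corr_mor R1 R2 quot.Q (dg_induced f) (dg_induced g) S f' g' (dg_induced h)"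
    and "dg_eq R12 (dg_comp (dg_induced h) (dg_quot_map R12 (dd R12 ` joint_kernel, joint_kernel))) h"
    and "dg_eq R12 (dg_comp k (dg_quot_map R12 (dd R12 ` joint_kernel, joint_kernel))) h \<Longrightarrow>
      dg_eq quot.Q k (dg_induced h)"
proof -
  have "dg_ring S"
    using adm by (simp add: admissible_def corr_def dg_ring_def)
  then have h: "dg_ring_hom R12 S h"
    using mor by (intro dg_ring_homI R12.dg_ring_axioms) (simp_all add: corr_mor_def)
  interpret h: dg_ring_hom R12 S h by (rule h)
  have h_J1: "x \<in> joint_kernel \<Longrightarrow> snd h x = \<zero>\<^bsub>deg1 S\<^esub>" for x
    by (rule corr_mor_to_admissible_kills_joint_kernel[OF adm mor])
  have h_J0: "a \<in> dd R12 ` joint_kernel \<Longrightarrow> fst h a = \<zero>\<^bsub>deg0 S\<^esub>" for a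
  proof (elim imageE)
    fix x assume "a = dd R12 x" "x \<in> joint_kernel"
    moreover have "x \<in> carrier (deg1 R12)"
      using \<open>x \<in> joint_kernel\<close> unfolding joint_kernel_def by blast
    ultimately show "fst h a = \<zero>\<^bsub>deg0 S\<^esub>"
      using h.hom1_dd h_J1 by (metis h.S.dd_zero)
  qed
  note induced_h [simp] = quot.induced0[OF h h_J0 h_J1] quot.induced1[OF h h_J0 h_J1]
  show "dg_eq R12 (dg_comp (dg_induced h) (dg_quot_map R12 (dd R12 ` joint_kernel, joint_kernel))) h"
    by (rule quot.induced_comp_quot_map[OF h h_J0 h_J1])
  show "dg_eq R12 (dg_comp k (dg_quot_map R12 (dd R12 ` joint_kernel, joint_kernel))) h \<Longrightarrow>
      dg_eq quot.Q k (dg_induced h)"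
    by (rule quot.dg_eq_induced_if_comp[OF h h_J0 h_J1])
  have comp: "dg_eq R12 (dg_comp f' h) f" "dg_eq R12 (dg_comp g' h) g"
    using mor by (simp_all add: corr_mor_def)
  have "dg_eq quot.Q (dg_comp f' (dg_induced h)) (dg_induced f)"
    by (rule quot.dg_eq_quotI) (use comp(1) in \<open>simp_all add: dg_eq_def dg_comp_def\<close>)
  moreover have "dg_eq quot.Q (dg_comp g' (dg_induced h)) (dg_induced g)"
    by (rule quot.dg_eq_quotI) (use comp(2) in \<open>simp_all add: dg_eq_def dg_comp_def\<close>)
  ultimately show "corr_mor R1 R2 quot.Q (dg_induced f) (dg_induced g) S f' g' (dg_induced h)"
    using dg_ring_hom.dg_hom[OF quot.dg_ring_hom_induced[OF h h_J0 h_J1]]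
    by (simp add: corr_mor_def)
qed

theorem is_Adm_quot_joint_kernel:
  assumes wa: "weakly_admissible R1 R12 R2 f g"
  shows "is_Adm R1 R2 R12 f g quot.Q (dg_induced f) (dg_induced g)
    (dg_quot_map R12 (dd R12 ` joint_kernel, joint_kernel)) TYPE(('m, 'n) dgr)"
  unfolding is_Adm_def
proof (intro conjI allI impI)
  show "anamorphism R1 R12 R2 f g"
    by (rule anamorphism_if_weakly_admissible[OF wa])
  show "admissible R1 quot.Q R2 (dg_induced f) (dg_induced g)"
    by (rule admissible_quot[OF wa])
  show "corr_mor R1 R2 R12 f g quot.Q (dg_induced f) (dg_induced g)
      (dg_quot_map R12 (dd R12 ` joint_kernel, joint_kernel))"
    by (rule corr_mor_quot_map)
  fix S :: "('m, 'n) dgr" and f' g' h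
  assume "admissible R1 S R2 f' g' \<and> corr_mor R1 R2 R12 f g S f' g' h"
  then have adm: "admissible R1 S R2 f' g'" and mor: "corr_mor R1 R2 R12 f g S f' g' h"
    by simp_all
  show "\<exists>k. corr_mor R1 R2 quot.Q (dg_induced f) (dg_induced g) S f' g' k \<and>
      dg_eq R12 (dg_comp k (dg_quot_map R12 (dd R12 ` joint_kernel, joint_kernel))) h \<and>
      (\<forall>k'. corr_mor R1 R2 quot.Q (dg_induced f) (dg_induced g) S f' g' k' \<and>
        dg_eq R12 (dg_comp k' (dg_quot_map R12 (dd R12 ` joint_kernel, joint_kernel))) h \<longrightarrow>
        dg_eq quot.Q k' k)"
    using corr_mor_factors_through_quot[OF adm mor]
    by (intro exI[of _ "dg_induced h"] conjI allI impI) simp_all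
qed

end

lemma dg_corr_if_corr: "corr R1 R12 R2 f g \<Longrightarrow> dg_corr R1 R12 R2 f g"
  by (simp add: corr_def dg_corr_def dg_corr_axioms_def dg_ring_def)

theorem lemma4p3p3:
  fixes R1 :: "('a, 'b) dgr" and R12 :: "('c, 'e) dgr" and R2 :: "('g, 'i) dgr"
    and f :: "('c \<Rightarrow> 'a) \<times> ('e \<Rightarrow> 'b)" and g :: "('c \<Rightarrow> 'g) \<times> ('e \<Rightarrow> 'i)"
  assumes wa: "weakly_admissible R1 R12 R2 f g"
  defines "K \<equiv> {x \<in> carrier (deg1 R12). snd f x = \<zero>\<^bsub>deg1 R1\<^esub> \<and> snd g x = \<zero>\<^bsub>deg1 R2\<^esub>}"
  defines "I \<equiv> dg_ideal_gen R12 K"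
  shows "dg_surj R12 R1 f \<and>
         dg_acyclic R12 (dg_kernel R12 R1 f) \<and>
         dg_acyclic R12 I \<and>
         is_Adm R1 R2 R12 f g (dg_quot R12 I) (dg_induced f) (dg_induced g)
           (dg_quot_map R12 I) TYPE(('m, 'n) dgr)"
proof -
  interpret dg_corr R1 R12 R2 f g
    using wa by (intro dg_corr_if_corr) (simp add: weakly_admissible_def)
  have qis: "quasi_iso R12 R1 f"
    using wa by (simp add: weakly_admissible_def)
  have K: "K = joint_kernel"
    unfolding K_def joint_kernel_def ..
  have I: "I = (dd R12 ` joint_kernel, joint_kernel)"
    unfolding I_def K by (rule R12.dg_ideal_gen_submodule[OF submodule_joint_kernel])
  have "dg_surj R12 R1 f"
    using anamorphism_if_weakly_admissible[OF wa] by (simp add: anamorphism_def)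
  then show ?thesis
    unfolding I
    using f.kernel_acyclic_if_quasi_iso[OF qis] dg_acyclic_joint_kernel_ideal[OF qis]
      is_Adm_quot_joint_kernel[OF wa]
    by blast
qed

end
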